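(* Let $\mathcal{P}$ be the set of $\omega=(R_{zz},R_{zx},R_{xz},R_{xx},t_z,t_x)\in\mathbb{R}^6$ for which $\mathcal{P}(\omega)\neq\emptyset$, where $\mathcal{P}(\omega)$ is the set of $R_{yy}\in\mathbb{R}$ such that the Stokes parameters given by $\omega$, $R_{yy}$, and $R_{zy}=R_{xy}=R_{yz}=R_{yx}=t_y=0$ define a qubit channel. Define on $\mathcal{P}$ $$F(\omega):=\min_{R_{yy}\in\mathcal{P}(\omega)} H_{\rho_{R_{yy}}}(X|E),$$ where $\rho_{R_{yy}}$ is the channel with these Stokes parameters. Then $F$ is a continuous function of $\omega$ on $\mathcal{P}$.
   Context: Qubit states are written in Stokes (Bloch) form $\varrho=\frac12(I+\theta_z\sigma_z+\theta_x\sigma_x+\theta_y\sigma_y)$. Every qubit channel $\mathcal{E}_B$ (TPCP map on $2\times 2$ matrices) acts on Bloch vectors as an affine map $\theta\mapsto R\theta+t$ with $R=[R_{ab}]_{a,b\in\{z,x,y\}}$ a real $3\times3$ matrix and $t=(t_z,t_x,t_y)$ real; these are the Stokes parameters. The Choi matrix is $\rho_{AB}=(\mathrm{id}\otimes\mathcal{E}_B)(\psi)$, $|\psi\rangle=\frac{1}{\sqrt2}(|00\rangle+|11\rangle)$ in the $\sigma_z$ eigenbasis. Eve's ambiguity is $H_\rho(X|E):=H(\rho_{XE})-H(\rho_E)$ with $\rho_{XE}=\sum_{x\in\{0,1\}}\frac12|x\rangle\langle x|\otimes\mathcal{E}_E(|x\rangle\langle x|)$, $\mathcal{E}_E$ the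 complementary channel of $\mathcal{E}_B$ to its whole environment; equivalently $H_\rho(X|E)=1+\frac12\sum_x H(\mathcal{E}_B(|x\rangle\langle x|))-H(\rho_{AB})$ (von Neumann entropy, base 2). *)

theory Defs
  imports Complex_Main "Jordan_Normal_Form.Char_Poly"
begin

text \<open>Stokes parameters: R is indexed by {0,1,2} = {z,x,y}, t likewise.\<close>

definition pauli :: "nat \<Rightarrow> complex mat" where
  "pauli a = (if a = 0 then mat 2 2 (\<lambda>(i,j). if i = j then (if i = 0 then 1 else -1) else 0)
              else if a = 1 then mat 2 2 (\<lambda>(i,j). if i = j then 0 else 1)
              else mat 2 2 (\<lambda>(i,j). if i = j then 0 else if i = 0 then -\<i> else \<i>))"

definition tr2 :: "complex mat \<Rightarrow> complex" where
  "tr2 M = M $$ (0,0) + M $$ (1,1)"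

text \<open>The (complex-linear) map on 2x2 matrices determined by the Stokes parameters:
  it sends 1/2(I + theta.sigma) to 1/2(I + (R theta + t).sigma).\<close>
definition stokes_map :: "(nat \<Rightarrow> nat \<Rightarrow> real) \<Rightarrow> (nat \<Rightarrow> real) \<Rightarrow> complex mat \<Rightarrow> complex mat" where
  "stokes_map R t M = (1/2) \<cdot>\<^sub>m (tr2 M \<cdot>\<^sub>m 1\<^sub>m 2 +
      (mat 2 2 (\<lambda>ij. \<Sum>a<3. ((tr2 M * of_real (t a) +
           (\<Sum>b<3. of_real (R a b) * tr2 (M * pauli b))) * pauli a $$ ij))))"

text \<open>id_k tensor E applied to a (2k)x(2k) matrix, index (i,a) ~ 2*i+a.\<close>
definition tensor_id_map :: "nat \<Rightarrow> (complex mat \<Rightarrow> complex mat) \<Rightarrow> complex mat \<Rightarrow> complex mat" where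
  "tensor_id_map k E X = mat (2*k) (2*k) (\<lambda>(p,q).
      E (mat 2 2 (\<lambda>(a,b). X $$ (2*(p div 2) + a, 2*(q div 2) + b))) $$ (p mod 2, q mod 2))"

definition psd :: "complex mat \<Rightarrow> bool" where
  "psd A \<longleftrightarrow> A \<in> carrier_mat (dim_row A) (dim_row A) \<and>
     (\<forall>v \<in> carrier_vec (dim_row A).
        Im (map_vec cnj v \<bullet> (A *\<^sub>v v)) = 0 \<and> 0 \<le> Re (map_vec cnj v \<bullet> (A *\<^sub>v v)))"

definition trace_preserving :: "(complex mat \<Rightarrow> complex mat) \<Rightarrow> bool" where
  "trace_preserving E \<longleftrightarrow> (\<forall>M \<in> carrier_mat 2 2. tr2 (E M) = tr2 M)"

definition completely_positive :: "(complex mat \<Rightarrow> complex mat) \<Rightarrow> bool" where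
  "completely_positive E \<longleftrightarrow>
     (\<forall>k X. k > 0 \<longrightarrow> X \<in> carrier_mat (2*k) (2*k) \<longrightarrow> psd X \<longrightarrow> psd (tensor_id_map k E X))"

text \<open>The Stokes parameters (R,t) define a qubit channel (TPCP map).  The map is linear
  by construction.\<close>
definition qubit_channel :: "(nat \<Rightarrow> nat \<Rightarrow> real) \<Rightarrow> (nat \<Rightarrow> real) \<Rightarrow> bool" where
  "qubit_channel R t \<longleftrightarrow> trace_preserving (stokes_map R t) \<and> completely_positive (stokes_map R t)"

text \<open>Von Neumann entropy (base 2), eigenvalues counted with multiplicity as roots of the
  characteristic polynomial; convention 0 log 0 = 0.\<close>
definition eta :: "real \<Rightarrow> real" where
  "eta x = (if x \<le> 0 then 0 else - x * log 2 x)"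

definition vn_entropy :: "complex mat \<Rightarrow> real" where
  "vn_entropy A = (\<Sum>z \<in> {z. poly (char_poly A) z = 0}.
                     real (order z (char_poly A)) * eta (Re z))"

definition ket_proj :: "nat \<Rightarrow> complex mat" where
  "ket_proj x = mat 2 2 (\<lambda>(i,j). if i = x \<and> j = x then 1 else 0)"

text \<open>Maximally entangled state psi psi^* for |psi> = (|00>+|11>)/sqrt 2.\<close>
definition psi_proj :: "complex mat" where
  "psi_proj = mat 4 4 (\<lambda>(i,j). if i \<in> {0,3} \<and> j \<in> {0,3} then 1/2 else 0)"

definition choi :: "(nat \<Rightarrow> nat \<Rightarrow> real) \<Rightarrow> (nat \<Rightarrow> real) \<Rightarrow> complex mat" where
  "choi R t = tensor_id_map 2 (stokes_map R t) psi_proj"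

text \<open>Eve's ambiguity H(X|E) = 1 + 1/2 sum_x H(E(|x><x|)) - H(rho_AB).\<close>
definition eve_ambiguity :: "(nat \<Rightarrow> nat \<Rightarrow> real) \<Rightarrow> (nat \<Rightarrow> real) \<Rightarrow> real" where
  "eve_ambiguity R t = 1 + (1/2) * (\<Sum>x<2. vn_entropy (stokes_map R t (ket_proj x)))
                         - vn_entropy (choi R t)"

type_synonym param6 = "real \<times> real \<times> real \<times> real \<times> real \<times> real"

text \<open>omega = (Rzz,Rzx,Rxz,Rxx,tz,tx) together with Ryy, other entries zero (0=z,1=x,2=y).\<close>
definition R_of :: "param6 \<Rightarrow> real \<Rightarrow> nat \<Rightarrow> nat \<Rightarrow> real" where
  "R_of w ryy = (case w of (rzz, rzx, rxz, rxx, tz, tx) \<Rightarrow>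
     (\<lambda>a b. if a = 0 \<and> b = 0 then rzz else if a = 0 \<and> b = 1 then rzx
           else if a = 1 \<and> b = 0 then rxz else if a = 1 \<and> b = 1 then rxx
           else if a = 2 \<and> b = 2 then ryy else 0))"

definition t_of :: "param6 \<Rightarrow> nat \<Rightarrow> real" where
  "t_of w = (case w of (rzz, rzx, rxz, rxx, tz, tx) \<Rightarrow>
     (\<lambda>a. if a = 0 then tz else if a = 1 then tx else 0))"

definition Pset :: "param6 \<Rightarrow> real set" where
  "Pset w = {ryy. qubit_channel (R_of w ryy) (t_of w)}"

definition Pdom :: "param6 set" where
  "Pdom = {w. Pset w \<noteq> {}}"

definition F :: "param6 \<Rightarrow> real" where
  "F w = Inf ((\<lambda>ryy. eve_ambiguity (R_of w ryy) (t_of w)) ` Pset w)"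

end

theory Submission
  imports Defs "HOL-Real_Asymp.Real_Asymp" "HOL-Analysis.Elementary_Metric_Spaces"
begin

text \<open>With the \<open>y\<close>-couplings switched off, the Stokes parameters define a qubit channel iff the
  Choi matrix, a real \<open>4 \<times> 4\<close> matrix \<open>C(\<omega>, R\<^sub>y\<^sub>y)\<close> affine in all parameters, is positive
  semidefinite (the Gram factorisation \<open>C = \<Sum>\<^sub>r u\<^sub>r u\<^sub>r\<^sup>T\<close> supplies Kraus operators). Hence the graph
  of \<open>\<omega> \<mapsto> \<P>(\<omega>)\<close> is closed and \<open>\<P>(\<omega>) \<subseteq> [-1, 1]\<close>. The entropies in \<open>H(X|E)\<close> are continuous in
  the matrix entries, because the roots of a monic polynomial depend continuously on its
  coefficients. Each fibre \<open>\<P>(\<omega>)\<close> is an interval; points strictly inside it make \<open>C\<close> positive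
  definite and so remain feasible for nearby \<open>\<omega>\<close>, while a one-point fibre is stable by
  closedness of the graph. So the correspondence is continuous, and Berge's maximum theorem
  gives continuity of the minimum \<open>F\<close>.\<close>

section \<open>Real quadratic forms\<close>

definition quad_form :: "nat \<Rightarrow> (nat \<Rightarrow> nat \<Rightarrow> real) \<Rightarrow> (nat \<Rightarrow> real) \<Rightarrow> real" where
  "quad_form n C x = (\<Sum>i<n. \<Sum>j<n. x i * C i j * x j)"

definition real_psd :: "nat \<Rightarrow> (nat \<Rightarrow> nat \<Rightarrow> real) \<Rightarrow> bool" where
  "real_psd n C \<longleftrightarrow> (\<forall>x. 0 \<le> quad_form n C x)"

lemma sum_lessThan_mult_of_bool_eq:
  "k < (n::nat) \<Longrightarrow> (\<Sum>j<n. f j * of_bool (j = k)) = (f k :: 'a::semiring_1)"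
  by (simp add: of_bool_def if_distrib[of "times _"] cong: if_cong)

lemma quad_form_unit: "k < n \<Longrightarrow> quad_form n C (\<lambda>i. of_bool (i = k)) = C k k"
  unfolding quad_form_def
  by (simp del: sum_mult_of_bool_eq sum_of_bool_mult_eq
      add: sum_lessThan_mult_of_bool_eq mult.commute[of "of_bool _"])

lemma real_psd_diag_nonneg: "real_psd n C \<Longrightarrow> k < n \<Longrightarrow> 0 \<le> C k k"
  using quad_form_unit unfolding real_psd_def by metis

lemma quad_form_shift:
  assumes sym: "\<And>i j. i < n \<Longrightarrow> j < n \<Longrightarrow> C i j = C j i" and k: "k < n"
  shows "quad_form n C (\<lambda>i. x i + t * of_bool (i = k))
    = quad_form n C x + 2 * t * (\<Sum>i<n. C i k * x i) + t\<^sup>2 * C k k"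
proof -
  let ?e = "\<lambda>i. t * of_bool (i = k)"
  have "quad_form n C (\<lambda>i. x i + ?e i) = quad_form n C x + (\<Sum>i<n. \<Sum>j<n. ?e i * C i j * x j)
      + (\<Sum>i<n. \<Sum>j<n. x i * C i j * ?e j) + (\<Sum>i<n. \<Sum>j<n. ?e i * C i j * ?e j)"
    by (simp add: quad_form_def algebra_simps sum.distrib)
  also have "(\<Sum>i<n. \<Sum>j<n. ?e i * C i j * x j) = (\<Sum>i<n. (t * (\<Sum>j<n. C i j * x j)) * of_bool (i = k))"
    by (simp add: sum_distrib_left mult_ac)
  also have "\<dots> = t * (\<Sum>i<n. C i k * x i)"
    using k sym by (simp add: sum_lessThan_mult_of_bool_eq)
  also have "(\<Sum>i<n. \<Sum>j<n. x i * C i j * ?e j) = (\<Sum>i<n. t * (x i * C i k))"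
    using k by (intro sum.cong refl) (simp add: sum_lessThan_mult_of_bool_eq mult.assoc[symmetric])
  also have "(\<Sum>i<n. \<Sum>j<n. ?e i * C i j * ?e j) = (\<Sum>i<n. (t * t * C i k) * of_bool (i = k))"
    by (intro sum.cong refl)
      (simp only: mult.assoc[symmetric] sum_lessThan_mult_of_bool_eq[OF k], simp add: mult_ac)
  also have "\<dots> = t\<^sup>2 * C k k"
    using k by (simp add: sum_lessThan_mult_of_bool_eq power2_eq_square)
  finally show ?thesis
    by (simp add: sum_distrib_left algebra_simps)
qed

text \<open>Otherwise moving \<open>x\<close> along the \<open>k\<close>-th coordinate would make the form negative.\<close>
lemma real_psd_null_vector:
  assumes psd: "real_psd n C" and sym: "\<And>i j. i < n \<Longrightarrow> j < n \<Longrightarrow> C i j = C j i"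
    and null: "quad_form n C x = 0" and k: "k < n"
  shows "(\<Sum>i<n. C i k * x i) = 0"
proof (rule ccontr)
  define S where "S = (\<Sum>i<n. C i k * x i)"
  assume "(\<Sum>i<n. C i k * x i) \<noteq> 0"
  then have S: "S \<noteq> 0" by (simp add: S_def)
  have ckk: "0 \<le> C k k" using real_psd_diag_nonneg[OF psd k] .
  define t where "t = - S / (C k k + 1)"
  have "0 \<le> quad_form n C (\<lambda>i. x i + t * of_bool (i = k))"
    using psd unfolding real_psd_def by blast
  also have "\<dots> = 2 * t * S + t\<^sup>2 * C k k"
    using quad_form_shift[OF sym k] null by (simp add: S_def)
  also have "\<dots> = S\<^sup>2 / (C k k + 1)\<^sup>2 * (- C k k - 2)"
    using ckk by (simp add: t_def divide_simps power2_eq_square) (simp add: algebra_simps)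
  also have "\<dots> < 0"
    using ckk S by (intro mult_pos_neg) auto
  finally show False by simp
qed

lemma real_psd_zero_diag:
  assumes "real_psd n C" and sym: "\<And>i j. i < n \<Longrightarrow> j < n \<Longrightarrow> C i j = C j i"
    and "C k k = 0" "i < n" "k < n"
  shows "C i k = 0"
proof -
  have "(\<Sum>j<n. C j i * of_bool (j = k)) = 0"
    using real_psd_null_vector[OF assms(1) sym _ \<open>i < n\<close>] quad_form_unit assms(3,5) by metis
  then show ?thesis using sym assms(4,5) by (simp add: sum_lessThan_mult_of_bool_eq)
qed

lemma real_psd_restrict: "real_psd (Suc n) C \<Longrightarrow> real_psd n C"
  unfolding real_psd_def
proof
  fix x :: "nat \<Rightarrow> real"
  assume "\<forall>x. 0 \<le> quad_form (Suc n) C x"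
  then have "0 \<le> quad_form (Suc n) C (\<lambda>i. if i < n then x i else 0)" ..
  then show "0 \<le> quad_form n C x"
    by (simp add: quad_form_def lessThan_Suc)
qed

text \<open>One step of the Cholesky decomposition.\<close>
lemma real_psd_rank_one_update:
  assumes psd: "real_psd n C" and sym: "\<And>i j. i < n \<Longrightarrow> j < n \<Longrightarrow> C i j = C j i"
    and k: "k < n" and pos: "0 < C k k"
  shows "real_psd n (\<lambda>i j. C i j - C i k * C j k / C k k)"
  unfolding real_psd_def
proof
  fix x :: "nat \<Rightarrow> real"
  define S where "S = (\<Sum>i<n. C i k * x i)"
  have "0 \<le> quad_form n C (\<lambda>i. x i + (- S / C k k) * of_bool (i = k))"
    using psd unfolding real_psd_def by blast
  also have "\<dots> = quad_form n C x + 2 * (- S / C k k) * S + (- S / C k k)\<^sup>2 * C k k"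
    by (simp only: quad_form_shift[OF sym k] S_def)
  also have "\<dots> = quad_form n C x - S\<^sup>2 / C k k"
    using pos by (simp add: field_simps power2_eq_square)
  also have "S\<^sup>2 / C k k = (\<Sum>i<n. \<Sum>j<n. x i * (C i k * C j k / C k k) * x j)"
    unfolding S_def power2_eq_square sum_product sum_divide_distrib
    by (intro sum.cong refl) (simp add: mult_ac)
  finally show "0 \<le> quad_form n (\<lambda>i j. C i j - C i k * C j k / C k k) x"
    by (simp add: quad_form_def algebra_simps sum_subtractf)
qed

lemma real_psd_gram:
  "real_psd n C \<Longrightarrow> (\<And>i j. i < n \<Longrightarrow> j < n \<Longrightarrow> C i j = C j i) \<Longrightarrow>
     \<exists>U. \<forall>i<n. \<forall>j<n. C i j = (\<Sum>r<n. U r i * U r j)"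
proof (induction n arbitrary: C)
  case 0
  then show ?case by simp
next
  case (Suc n)
  have extend: "\<exists>U. \<forall>i<Suc n. \<forall>j<Suc n. C i j = (\<Sum>r<Suc n. U r i * U r j)"
    if psd: "real_psd (Suc n) D" and symD: "\<And>i j. i < Suc n \<Longrightarrow> j < Suc n \<Longrightarrow> D i j = D j i"
      and u: "\<And>i j. i < Suc n \<Longrightarrow> j < Suc n \<Longrightarrow> C i j = D i j + u i * u j"
      and Dn: "D n n = 0" for D u
  proof -
    have Dcol: "D i n = 0" "D n i = 0" if "i < Suc n" for i
      using real_psd_zero_diag[OF psd symD Dn that] symD that by auto
    obtain U where U: "\<forall>i<n. \<forall>j<n. D i j = (\<Sum>r<n. U r i * U r j)"
      using Suc.IH[OF real_psd_restrict[OF psd]] symD by force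
    show ?thesis
    proof (intro exI allI impI)
      fix i j assume "i < Suc n" "j < Suc n"
      then show "C i j = (\<Sum>r<Suc n. (if r < n \<and> i < n then U r i else if r = n then u i else 0)
                                     * (if r < n \<and> j < n then U r j else if r = n then u j else 0))"
        using U Dcol u by (auto simp: lessThan_Suc less_Suc_eq)
    qed
  qed
  show ?case
  proof (cases "C n n = 0")
    case True
    show ?thesis by (rule extend[OF Suc.prems(1), of "\<lambda>_. 0"]) (use Suc.prems True in auto)
  next
    case False
    then have pos: "0 < C n n" using real_psd_diag_nonneg[OF Suc.prems(1)] by force
    show ?thesis
    proof (rule extend[OF real_psd_rank_one_update[OF Suc.prems(1,2) _ pos], of "\<lambda>i. C i n / sqrt (C n n)"])
      fix i j assume "i < Suc n" "j < Suc n"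
      then show "C i j = C i j - C i n * C j n / C n n + C i n / sqrt (C n n) * (C j n / sqrt (C n n))"
        using pos by (simp add: field_simps)
    qed (use Suc.prems pos in auto)
  qed
qed

lemma quad_form_diff_bound:
  "\<bar>quad_form n C' x - quad_form n C x\<bar>
     \<le> (\<Sum>i<n. \<Sum>j<n. \<bar>C' i j - C i j\<bar>) * (\<Sum>k<n. (x k)\<^sup>2)"
proof -
  let ?N = "\<Sum>k<n. (x k)\<^sup>2"
  have prod_le: "\<bar>x i * x j\<bar> \<le> ?N" if "i < n" "j < n" for i j
  proof -
    have "\<bar>x i * x j\<bar> \<le> ((x i)\<^sup>2 + (x j)\<^sup>2) / 2"
      using sum_squares_bound[of "\<bar>x i\<bar>" "\<bar>x j\<bar>"] by (simp add: abs_mult)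
    also have "\<dots> \<le> ?N"
      using that member_le_sum[of i "{..<n}" "\<lambda>k. (x k)\<^sup>2"] member_le_sum[of j "{..<n}" "\<lambda>k. (x k)\<^sup>2"]
      by auto
    finally show ?thesis .
  qed
  have "\<bar>quad_form n C' x - quad_form n C x\<bar> = \<bar>\<Sum>i<n. \<Sum>j<n. (C' i j - C i j) * (x i * x j)\<bar>"
    unfolding quad_form_def by (simp add: sum_subtractf[symmetric] algebra_simps)
  also have "\<dots> \<le> (\<Sum>i<n. \<Sum>j<n. \<bar>C' i j - C i j\<bar> * \<bar>x i * x j\<bar>)"
    by (rule order_trans[OF sum_abs]) (intro sum_mono order_trans[OF sum_abs], simp add: abs_mult)
  also have "\<dots> \<le> (\<Sum>i<n. \<Sum>j<n. \<bar>C' i j - C i j\<bar> * ?N)"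
    by (intro sum_mono mult_left_mono prod_le) auto
  finally show ?thesis by (simp add: sum_distrib_right)
qed

lemma real_psd_perturb:
  assumes margin: "\<And>x. \<delta> * (\<Sum>k<n. (x k)\<^sup>2) \<le> quad_form n C x"
    and close: "(\<Sum>i<n. \<Sum>j<n. \<bar>C' i j - C i j\<bar>) \<le> \<delta>"
  shows "real_psd n C'"
  unfolding real_psd_def
proof
  fix x
  have "(\<Sum>i<n. \<Sum>j<n. \<bar>C' i j - C i j\<bar>) * (\<Sum>k<n. (x k)\<^sup>2) \<le> \<delta> * (\<Sum>k<n. (x k)\<^sup>2)"
    by (intro mult_right_mono close sum_nonneg) auto
  then show "0 \<le> quad_form n C' x"
    using quad_form_diff_bound[of n C' x C] margin[of x] by linarith
qed

lemma sum_lessThan_4: "(\<Sum>i<(4::nat). f i) = f 0 + f 1 + f 2 + (f 3 :: 'a::comm_monoid_add)"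
  by (simp add: eval_nat_numeral lessThan_Suc add_ac)

text \<open>Minimise the form over the compact unit sphere of \<open>\<real>\<^sup>4\<close>.\<close>
lemma quad_form_4_pos_margin:
  assumes pd: "\<And>x. (\<exists>i<4. x i \<noteq> 0) \<Longrightarrow> 0 < quad_form 4 C x"
  obtains \<delta> where "0 < \<delta>" "\<And>x. \<delta> * (\<Sum>i<4. (x i)\<^sup>2) \<le> quad_form 4 C x"
proof -
  define coord :: "real \<times> real \<times> real \<times> real \<Rightarrow> nat \<Rightarrow> real" where
    "coord v i = (case v of (a, b, c, d) \<Rightarrow> if i = 0 then a else if i = 1 then b else if i = 2 then c else d)"
    for v i
  define vec4 where "vec4 x = (x 0, x 1, x 2, x 3)" for x :: "nat \<Rightarrow> real"
  have coord_vec4: "coord (vec4 x) i = x i" if "i < 4" for x i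
    using that by (auto simp: coord_def vec4_def less_Suc_eq numeral_eq_Suc)
  have norm_vec4: "(norm (vec4 x))\<^sup>2 = (\<Sum>i<4. (x i)\<^sup>2)" for x
    by (simp add: vec4_def norm_Pair sum_lessThan_4)
  let ?S = "{v :: real \<times> real \<times> real \<times> real. norm v = 1}"
  have "compact ?S"
    unfolding compact_eq_bounded_closed bounded_iff by (auto intro: closed_Collect_eq continuous_intros)
  let ?f = "\<lambda>v. quad_form 4 C (coord v)"
  have "continuous_on ?S (\<lambda>v. coord v i)" for i
    by (cases "i = 0"; cases "i = 1"; cases "i = 2")
      (auto simp: coord_def split_def intro!: continuous_intros)
  then have "continuous_on ?S ?f"
    unfolding quad_form_def by (intro continuous_intros)
  moreover have "(1, 0, 0, 0) \<in> ?S" by (simp add: norm_Pair)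
  ultimately obtain v0 where v0: "v0 \<in> ?S" "\<And>v. v \<in> ?S \<Longrightarrow> ?f v0 \<le> ?f v"
    using continuous_attains_inf[OF \<open>compact ?S\<close>] by blast
  have "vec4 (coord v0) = v0" by (simp add: vec4_def coord_def split: prod.splits)
  then have "(\<Sum>i<4. (coord v0 i)\<^sup>2) = 1" using v0(1) norm_vec4[of "coord v0"] by simp
  then have "\<exists>i<4. coord v0 i \<noteq> 0" by (rule contrapos_pp) simp
  then have pos: "0 < ?f v0" by (rule pd)
  show ?thesis
  proof (rule that[OF pos])
    fix x :: "nat \<Rightarrow> real"
    show "?f v0 * (\<Sum>i<4. (x i)\<^sup>2) \<le> quad_form 4 C x"
    proof (cases "vec4 x = 0")
      case True
      then have "x i = 0" if "i < 4" for i
        using coord_vec4[OF that, of x] by (simp add: coord_def zero_prod_def split: if_splits)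
      then show ?thesis by (simp add: quad_form_def)
    next
      case False
      let ?r = "norm (vec4 x)"
      have "?f v0 \<le> ?f ((1 / ?r) *\<^sub>R vec4 x)" using False by (intro v0(2)) simp
      also have "\<dots> = quad_form 4 C (\<lambda>i. (1 / ?r) * x i)"
        unfolding quad_form_def
        by (intro sum.cong refl) (auto simp: coord_def vec4_def less_Suc_eq numeral_eq_Suc)
      also have "\<dots> = (1 / ?r)\<^sup>2 * quad_form 4 C x"
        by (simp add: quad_form_def sum_distrib_left power2_eq_square mult_ac)
      finally have "?f v0 * ?r\<^sup>2 \<le> quad_form 4 C x" using False by (simp add: field_simps)
      then show ?thesis by (simp add: norm_vec4)
    qed
  qed
qed

section \<open>Qubit channels and their Choi matrices\<close>

lemma sum_lessThan_3: "(\<Sum>a<(3::nat). f a) = f 0 + f 1 + (f 2 :: 'a::comm_monoid_add)"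
  by (simp add: eval_nat_numeral lessThan_Suc add_ac)

lemma less_4_cases: "(i::nat) < 4 \<Longrightarrow> i = 0 \<or> i = 1 \<or> i = 2 \<or> i = 3"
  by auto

lemma stokes_map_entries:
  fixes M :: "complex mat"
  assumes "M \<in> carrier_mat 2 2"
  shows "stokes_map R t M = mat 2 2 (\<lambda>(a,b).
     (let m00 = M$$(0,0); m01 = M$$(0,1); m10 = M$$(1,0); m11 = M$$(1,1); tr = m00 + m11;
          az = tr * t 0 + R 0 0 * (m00 - m11) + R 0 1 * (m01 + m10) + R 0 2 * \<i> * (m01 - m10);
          ax = tr * t 1 + R 1 0 * (m00 - m11) + R 1 1 * (m01 + m10) + R 1 2 * \<i> * (m01 - m10);
          ay = tr * t 2 + R 2 0 * (m00 - m11) + R 2 1 * (m01 + m10) + R 2 2 * \<i> * (m01 - m10)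
      in (1/2) * (if a = 0 \<and> b = 0 then tr + az else if a = 1 \<and> b = 1 then tr - az
                  else if a = 0 then ax - \<i> * ay else ax + \<i> * ay)))"
  using assms
  by (intro eq_matI)
    (auto simp: stokes_map_def sum_lessThan_3 pauli_def tr2_def Let_def scalar_prod_def times_mat_def
      algebra_simps less_2_cases_iff numeral_2_eq_2 lessThan_Suc)

lemma stokes_map_carrier: "stokes_map R t M \<in> carrier_mat 2 2"
  by (simp add: stokes_map_def)

lemma trace_preserving_stokes_map: "trace_preserving (stokes_map R t)"
  unfolding trace_preserving_def
proof
  fix M :: "complex mat" assume "M \<in> carrier_mat 2 2"
  then show "tr2 (stokes_map R t M) = tr2 M"
    by (simp add: stokes_map_entries tr2_def Let_def field_simps)
qed

definition choi_coeff :: "param6 \<Rightarrow> real \<Rightarrow> nat \<Rightarrow> nat \<Rightarrow> real" where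
  "choi_coeff w s i j = (case w of (rzz, rzx, rxz, rxx, tz, tx) \<Rightarrow> (1/4) * (
     if i = 0 \<and> j = 0 then 1 + tz + rzz else if i = 1 \<and> j = 1 then 1 - tz - rzz
     else if i = 2 \<and> j = 2 then 1 + tz - rzz else if i = 3 \<and> j = 3 then 1 - tz + rzz
     else if (i = 0 \<and> j = 1) \<or> (i = 1 \<and> j = 0) then tx + rxz
     else if (i = 0 \<and> j = 2) \<or> (i = 2 \<and> j = 0) then rzx
     else if (i = 0 \<and> j = 3) \<or> (i = 3 \<and> j = 0) then rxx + s
     else if (i = 1 \<and> j = 2) \<or> (i = 2 \<and> j = 1) then rxx - s
     else if (i = 1 \<and> j = 3) \<or> (i = 3 \<and> j = 1) then - rzx
     else if (i = 2 \<and> j = 3) \<or> (i = 3 \<and> j = 2) then tx - rxz else 0))"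

lemma choi_eq_choi_coeff: "choi (R_of w s) (t_of w) = mat 4 4 (\<lambda>(i,j). of_real (choi_coeff w s i j))"
proof (rule eq_matI)
  fix i j assume "i < dim_row (mat 4 4 (\<lambda>(i,j). of_real (choi_coeff w s i j)) :: complex mat)"
    "j < dim_col (mat 4 4 (\<lambda>(i,j). of_real (choi_coeff w s i j)) :: complex mat)"
  then have i: "i < 4" and j: "j < 4" by auto
  obtain rzz rzx rxz rxx tz tx where w: "w = (rzz, rzx, rxz, rxx, tz, tx)" by (cases w) auto
  show "choi (R_of w s) (t_of w) $$ (i, j) = mat 4 4 (\<lambda>(i,j). of_real (choi_coeff w s i j)) $$ (i, j)"
    using less_4_cases[OF i] less_4_cases[OF j]
    by (auto simp: choi_def tensor_id_map_def stokes_map_entries psi_proj_def w R_of_def t_of_def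
        choi_coeff_def Let_def field_simps)
qed (auto simp: choi_def tensor_id_map_def)

lemma choi_coeff_sym: "i < 4 \<Longrightarrow> j < 4 \<Longrightarrow> choi_coeff w s i j = choi_coeff w s j i"
  by (cases w, drule less_4_cases, drule less_4_cases, elim disjE) (simp_all add: choi_coeff_def)

lemma stokes_map_entry_choi_coeff:
  assumes M: "M \<in> carrier_mat 2 2" and "a < 2" "b < 2"
  shows "stokes_map (R_of w s) (t_of w) M $$ (a,b) =
    (\<Sum>c<2. \<Sum>d<2. M$$(c,d) * of_real (2 * choi_coeff w s (2*c+a) (2*d+b)))"
proof -
  obtain rzz rzx rxz rxx tz tx where w: "w = (rzz, rzx, rxz, rxx, tz, tx)" by (cases w) auto
  have sum_2_2: "(\<Sum>c<(2::nat). \<Sum>d<(2::nat). f c d) = f 0 0 + f 0 1 + f 1 0 + (f 1 1 :: complex)" for f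
    by (simp add: eval_nat_numeral lessThan_Suc)
  have "a = 0 \<or> a = 1" "b = 0 \<or> b = 1" using assms(2,3) by auto
  then show ?thesis
    unfolding stokes_map_entries[OF M] sum_2_2 using assms(2,3)
    by (elim disjE) (simp_all add: w R_of_def t_of_def choi_coeff_def Let_def, simp_all add: field_simps)
qed

lemma cquad_form_expand:
  assumes "A \<in> carrier_mat n n" "v \<in> carrier_vec n"
  shows "map_vec cnj v \<bullet> (A *\<^sub>v v) = (\<Sum>i<n. \<Sum>j<n. cnj (v$i) * A$$(i,j) * v$j)"
  using assms
  by (auto simp: scalar_prod_def mult_mat_vec_def row_def atLeast0LessThan sum_distrib_left
       mult.assoc intro!: sum.cong)

lemma real_psd_if_psd_of_real:
  assumes "psd (mat n n (\<lambda>(i,j). of_real (C i j)))"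
  shows "real_psd n C"
  unfolding real_psd_def
proof
  fix x :: "nat \<Rightarrow> real"
  let ?v = "vec n (\<lambda>i. complex_of_real (x i))"
  let ?A = "mat n n (\<lambda>(i,j). complex_of_real (C i j))"
  have "0 \<le> Re (map_vec cnj ?v \<bullet> (?A *\<^sub>v ?v))" using assms unfolding psd_def by auto
  also have "map_vec cnj ?v \<bullet> (?A *\<^sub>v ?v) = of_real (quad_form n C x)"
    by (subst cquad_form_expand[of _ n]) (auto simp: quad_form_def)
  finally show "0 \<le> quad_form n C x" by simp
qed

lemma psd_psi_proj: "psd psi_proj"
  unfolding psd_def
proof (intro conjI ballI)
  show "psi_proj \<in> carrier_mat (dim_row psi_proj) (dim_row psi_proj)" by (simp add: psi_proj_def)
  fix v :: "complex vec" assume v: "v \<in> carrier_vec (dim_row psi_proj)"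
  have "map_vec cnj v \<bullet> (psi_proj *\<^sub>v v) = (1/2) * (cnj (v$0 + v$3) * (v$0 + v$3))"
    using v by (subst cquad_form_expand[of _ 4])
      (auto simp: psi_proj_def eval_nat_numeral lessThan_Suc algebra_simps)
  also have "cnj (v$0 + v$3) * (v$0 + v$3) = of_real ((cmod (v$0 + v$3))\<^sup>2)"
    by (metis complex_norm_square mult.commute)
  finally have q: "map_vec cnj v \<bullet> (psi_proj *\<^sub>v v) = of_real ((cmod (v$0 + v$3))\<^sup>2 / 2)"
    by simp
  show "Im (map_vec cnj v \<bullet> (psi_proj *\<^sub>v v)) = 0"
    unfolding q by (rule Im_complex_of_real)
  show "0 \<le> Re (map_vec cnj v \<bullet> (psi_proj *\<^sub>v v))"
    unfolding q Re_complex_of_real by simp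
qed

lemma real_psd_choi_coeff_if_completely_positive:
  assumes "completely_positive (stokes_map (R_of w s) (t_of w))"
  shows "real_psd 4 (choi_coeff w s)"
proof -
  have "psd (choi (R_of w s) (t_of w))"
    using assms psd_psi_proj unfolding completely_positive_def choi_def
    by (auto simp: psi_proj_def)
  then show ?thesis unfolding choi_eq_choi_coeff by (rule real_psd_if_psd_of_real)
qed

lemma sum_lessThan_double: "(\<Sum>p<2*(k::nat). f p :: 'a::comm_monoid_add) = (\<Sum>i<k. \<Sum>a<2. f (2*i+a))"
  by (induction k) (auto simp: eval_nat_numeral lessThan_Suc add.assoc)

text \<open>\<open>(I \<otimes> U\<^sub>r) v\<close> for the real \<open>2 \<times> 2\<close> matrix \<open>U\<^sub>r = (U r (2*c+b))\<^sub>c\<^sub>,\<^sub>b\<close>.\<close>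
definition id_tensor_apply :: "(nat \<Rightarrow> nat \<Rightarrow> real) \<Rightarrow> nat \<Rightarrow> complex vec \<Rightarrow> complex vec" where
  "id_tensor_apply U r v = vec (dim_vec v)
     (\<lambda>p. \<Sum>b<2. v $ (2 * (p div 2) + b) * of_real (U r (2 * (p mod 2) + b)))"

lemma cquad_form_gram_block:
  fixes va vb :: "nat \<Rightarrow> complex" and Z :: "nat \<Rightarrow> nat \<Rightarrow> complex" and U :: "nat \<Rightarrow> nat \<Rightarrow> real"
  shows "(\<Sum>a<2. \<Sum>b<2. cnj (va a) * (\<Sum>c<2. \<Sum>d<2. Z c d * of_real (2 * (\<Sum>r<4. U r (2*c+a) * U r (2*d+b)))) * vb b)
    = 2 * (\<Sum>r<4. \<Sum>c<2. \<Sum>d<2. cnj (\<Sum>a<2. va a * of_real (U r (2*c+a))) * Z c d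
                                  * (\<Sum>b<2. vb b * of_real (U r (2*d+b))))"
  by (simp add: eval_nat_numeral lessThan_Suc algebra_simps)

text \<open>If the Choi matrix of \<open>E\<close> is the Gram matrix \<open>\<Sum>\<^sub>r u\<^sub>r u\<^sub>r\<^sup>T\<close>, then the \<open>u\<^sub>r\<close> are Kraus
  operators: the quadratic form of \<open>(id \<otimes> E) X\<close> is a sum of quadratic forms of \<open>X\<close>.\<close>
lemma tensor_id_map_cquad_form:
  fixes U :: "nat \<Rightarrow> nat \<Rightarrow> real"
  assumes E: "\<And>M a b. M \<in> carrier_mat 2 2 \<Longrightarrow> a < 2 \<Longrightarrow> b < 2 \<Longrightarrow>
      E M $$ (a, b) = (\<Sum>c<2. \<Sum>d<2. M $$ (c, d) * of_real (2 * (\<Sum>r<4. U r (2*c+a) * U r (2*d+b))))"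
    and X: "X \<in> carrier_mat (2*k) (2*k)" and v: "v \<in> carrier_vec (2*k)"
  shows "map_vec cnj v \<bullet> (tensor_id_map k E X *\<^sub>v v)
     = 2 * (\<Sum>r<4. map_vec cnj (id_tensor_apply U r v) \<bullet> (X *\<^sub>v id_tensor_apply U r v))"
proof -
  let ?Y = "tensor_id_map k E X" and ?W = "\<lambda>r. id_tensor_apply U r v"
  have idx: "(2*i+a) div 2 = i" "(2*i+a) mod 2 = a" if "a < 2" for i a :: nat
    using that by auto
  have Y: "?Y \<in> carrier_mat (2*k) (2*k)" by (simp add: tensor_id_map_def)
  have W: "?W r \<in> carrier_vec (2*k)" for r using v by (simp add: id_tensor_apply_def)
  have Y_entry: "?Y $$ (2*i+a, 2*j+b) = (\<Sum>c<2. \<Sum>d<2. X$$(2*i+c, 2*j+d) *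
         of_real (2 * (\<Sum>r<4. U r (2*c+a) * U r (2*d+b))))"
    if "i < k" "j < k" "a < 2" "b < 2" for i j a b
    using that by (simp add: tensor_id_map_def idx E)
  have W_entry: "?W r $ (2*j+d) = (\<Sum>b<2. v$(2*j+b) * of_real (U r (2*d+b)))" if "j < k" "d < 2" for r j d
    using that v by (simp add: id_tensor_apply_def idx)
  have "map_vec cnj v \<bullet> (?Y *\<^sub>v v)
      = (\<Sum>i<k. \<Sum>a<2. \<Sum>j<k. \<Sum>b<2. cnj (v$(2*i+a)) * ?Y$$(2*i+a,2*j+b) * v$(2*j+b))"
    unfolding cquad_form_expand[OF Y v] by (simp only: sum_lessThan_double)
  also have "\<dots> = (\<Sum>i<k. \<Sum>j<k. \<Sum>a<2. \<Sum>b<2. cnj (v$(2*i+a)) * ?Y$$(2*i+a,2*j+b) * v$(2*j+b))"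
    by (rule sum.cong[OF refl], rule sum.swap)
  also have "\<dots> = (\<Sum>i<k. \<Sum>j<k. \<Sum>a<2. \<Sum>b<2. cnj (v$(2*i+a)) * (\<Sum>c<2. \<Sum>d<2.
      X$$(2*i+c, 2*j+d) * of_real (2 * (\<Sum>r<4. U r (2*c+a) * U r (2*d+b)))) * v$(2*j+b))"
    by (intro sum.cong refl) (simp add: Y_entry)
  also have "\<dots> = (\<Sum>i<k. \<Sum>j<k. 2 * (\<Sum>r<4. \<Sum>c<2. \<Sum>d<2.
      cnj (\<Sum>a<2. v$(2*i+a) * of_real (U r (2*c+a))) * X$$(2*i+c, 2*j+d)
      * (\<Sum>b<2. v$(2*j+b) * of_real (U r (2*d+b)))))"
    by (rule sum.cong[OF refl], rule sum.cong[OF refl], rule cquad_form_gram_block)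
  also have "\<dots> = (\<Sum>i<k. \<Sum>j<k. 2 * (\<Sum>r<4. \<Sum>c<2. \<Sum>d<2.
      cnj (?W r $ (2*i+c)) * X$$(2*i+c, 2*j+d) * ?W r $ (2*j+d)))"
    by (intro sum.cong refl) (simp add: W_entry)
  also have "\<dots> = 2 * (\<Sum>r<4. \<Sum>i<k. \<Sum>j<k. \<Sum>c<2. \<Sum>d<2.
      cnj (?W r $ (2*i+c)) * X$$(2*i+c, 2*j+d) * ?W r $ (2*j+d))"
    unfolding sum_distrib_left[symmetric]
    by (rule arg_cong[where f = "\<lambda>x. 2 * x"], rule trans, rule sum.cong[OF refl], rule sum.swap,
        rule sum.swap)
  also have "\<dots> = 2 * (\<Sum>r<4. \<Sum>i<k. \<Sum>c<2. \<Sum>j<k. \<Sum>d<2.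
      cnj (?W r $ (2*i+c)) * X$$(2*i+c, 2*j+d) * ?W r $ (2*j+d))"
    by (rule arg_cong[where f = "\<lambda>x. 2 * x"], rule sum.cong[OF refl], rule sum.cong[OF refl], rule sum.swap)
  also have "\<dots> = 2 * (\<Sum>r<4. map_vec cnj (?W r) \<bullet> (X *\<^sub>v ?W r))"
    unfolding cquad_form_expand[OF X W] by (simp only: sum_lessThan_double)
  finally show ?thesis .
qed

lemma completely_positive_if_real_psd_choi:
  fixes K :: "nat \<Rightarrow> nat \<Rightarrow> real"
  assumes E: "\<And>M a b. M \<in> carrier_mat 2 2 \<Longrightarrow> a < 2 \<Longrightarrow> b < 2 \<Longrightarrow>
      E M $$ (a, b) = (\<Sum>c<2. \<Sum>d<2. M $$ (c, d) * of_real (2 * K (2*c+a) (2*d+b)))"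
    and psd: "real_psd 4 K" and sym: "\<And>i j. i < 4 \<Longrightarrow> j < 4 \<Longrightarrow> K i j = K j i"
  shows "completely_positive E"
  unfolding completely_positive_def
proof (intro allI impI)
  fix k X assume X: "X \<in> carrier_mat (2*k) (2*k)" and "psd X"
  obtain U :: "nat \<Rightarrow> nat \<Rightarrow> real" where U: "\<forall>i<4. \<forall>j<4. K i j = (\<Sum>r<4. U r i * U r j)"
    using real_psd_gram[OF psd sym] by blast
  have E_gram: "E M $$ (a, b) = (\<Sum>c<2. \<Sum>d<2. M $$ (c, d) * of_real (2 * (\<Sum>r<4. U r (2*c+a) * U r (2*d+b))))"
    if "M \<in> carrier_mat 2 2" "a < 2" "b < 2" for M a b
    using that U by (simp add: E)
  let ?Y = "tensor_id_map k E X"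
  show "psd ?Y" unfolding psd_def
  proof (intro conjI ballI)
    show "?Y \<in> carrier_mat (dim_row ?Y) (dim_row ?Y)" by (simp add: tensor_id_map_def)
    fix v :: "complex vec" assume "v \<in> carrier_vec (dim_row ?Y)"
    then have v: "v \<in> carrier_vec (2*k)" by (simp add: tensor_id_map_def)
    let ?q = "\<lambda>r. map_vec cnj (id_tensor_apply U r v) \<bullet> (X *\<^sub>v id_tensor_apply U r v)"
    have "Im (?q r) = 0 \<and> 0 \<le> Re (?q r)" for r
      using \<open>psd X\<close> X v unfolding psd_def by (simp add: id_tensor_apply_def)
    moreover have "map_vec cnj v \<bullet> (?Y *\<^sub>v v) = 2 * (\<Sum>r<4. ?q r)"
      by (rule tensor_id_map_cquad_form[OF E_gram X v])
    ultimately show "Im (map_vec cnj v \<bullet> (?Y *\<^sub>v v)) = 0" "0 \<le> Re (map_vec cnj v \<bullet> (?Y *\<^sub>v v))"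
      by (simp_all add: Im_sum Re_sum sum_nonneg)
  qed
qed

lemma qubit_channel_iff_real_psd: "qubit_channel (R_of w s) (t_of w) \<longleftrightarrow> real_psd 4 (choi_coeff w s)"
  using real_psd_choi_coeff_if_completely_positive
    completely_positive_if_real_psd_choi[OF stokes_map_entry_choi_coeff _ choi_coeff_sym]
    trace_preserving_stokes_map
  unfolding qubit_channel_def by blast

section \<open>Continuity of the entropies\<close>

definition root_sum :: "(complex \<Rightarrow> real) \<Rightarrow> complex poly \<Rightarrow> real" where
  "root_sum g p = (\<Sum>z\<in>{z. poly p z = 0}. real (order z p) * g z)"

lemma root_sum_eq_sum_superset:
  assumes "p \<noteq> 0" "finite A" "{z. poly p z = 0} \<subseteq> A"
  shows "root_sum g p = (\<Sum>z\<in>A. real (order z p) * g z)"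
  unfolding root_sum_def
  by (rule sum.mono_neutral_left[OF assms(2,3)]) (use assms(1) order_root in auto)

lemma root_sum_linear_mult:
  assumes q: "q \<noteq> 0"
  shows "root_sum g ([:-b, 1:] * q) = g b + root_sum g q"
proof -
  let ?A = "insert b {z. poly q z = 0}"
  have fin: "finite ?A" using poly_roots_finite[OF q] by simp
  have "[:-b, 1:] \<noteq> (0 :: complex poly)" by simp
  then have nz: "[:-b, 1:] * q \<noteq> 0" using q by (rule no_zero_divisors)
  have "root_sum g ([:-b, 1:] * q) = (\<Sum>z\<in>?A. real (order z ([:-b, 1:] * q)) * g z)"
    by (rule root_sum_eq_sum_superset[OF nz fin]) (auto simp: poly_mult)
  also have "\<dots> = (\<Sum>z\<in>?A. (if z = b then g z else 0) + real (order z q) * g z)"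
  proof (intro sum.cong refl)
    fix z
    have "order z ([:-b, 1:] * q) = order z [:-b, 1:] + order z q" by (rule order_mult[OF nz])
    also have "order z [:-b, 1:] = (if z = b then 1 else 0)" by (simp add: order_linear')
    finally show "real (order z ([:-b, 1:] * q)) * g z = (if z = b then g z else 0) + real (order z q) * g z"
      by (simp add: distrib_right)
  qed
  also have "\<dots> = g b + (\<Sum>z\<in>?A. real (order z q) * g z)"
    using fin by (simp add: sum.distrib)
  also have "(\<Sum>z\<in>?A. real (order z q) * g z) = root_sum g q"
    by (rule root_sum_eq_sum_superset[symmetric, OF q fin]) auto
  finally show ?thesis .
qed

lemma poly_eq_sum_lessThan:
  fixes p :: "complex poly"
  assumes "degree p < N"
  shows "poly p c = (\<Sum>i<N. coeff p i * c ^ i)"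
proof -
  have "poly p c = (\<Sum>i\<le>degree p. coeff p i * c ^ i)" by (rule poly_altdef)
  also have "\<dots> = (\<Sum>i<N. coeff p i * c ^ i)"
    using assms by (intro sum.mono_neutral_left) (auto simp: coeff_eq_0)
  finally show ?thesis .
qed

lemma coeff_synthetic_div_eq_sum:
  fixes p :: "complex poly"
  shows "degree p \<le> N \<Longrightarrow> coeff (synthetic_div p c) j = (\<Sum>i<N. coeff p (Suc j + i) * c ^ i)"
proof (induction p arbitrary: j N rule: pCons_induct)
  case (pCons a p)
  show ?case
  proof (cases j)
    case 0
    show ?thesis
    proof (cases "p = 0")
      case False
      then have "degree p < N" using pCons.prems by simp
      then show ?thesis using 0 by (simp add: poly_eq_sum_lessThan)
    qed (use 0 in simp)
  next
    case (Suc j')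
    have "degree p \<le> N" using pCons.prems by (cases "p = 0") auto
    then show ?thesis using Suc pCons.IH by simp
  qed
qed simp

lemma monic_synthetic_div:
  fixes p :: "complex poly"
  assumes "degree p = Suc m" "coeff p (Suc m) = 1"
  shows "degree (synthetic_div p c) = m \<and> coeff (synthetic_div p c) m = 1"
proof
  show "degree (synthetic_div p c) = m" using assms(1) by (simp add: degree_synthetic_div)
  have "coeff (synthetic_div p c) m = (\<Sum>i<Suc m. coeff p (Suc m + i) * c ^ i)"
    by (rule coeff_synthetic_div_eq_sum) (use assms(1) in simp)
  also have "\<dots> = (\<Sum>i<Suc m. if i = 0 then 1 else 0)"
    using assms by (intro sum.cong refl) (auto simp: coeff_eq_0)
  finally show "coeff (synthetic_div p c) m = 1" by simp
qed

definition coeffs_tendsto :: "(nat \<Rightarrow> complex poly) \<Rightarrow> complex poly \<Rightarrow> bool" where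
  "coeffs_tendsto P p \<longleftrightarrow> (\<forall>i. (\<lambda>k. coeff (P k) i) \<longlonglongrightarrow> coeff p i)"

lemma coeffs_tendsto_const: "coeffs_tendsto (\<lambda>k. c) c"
  unfolding coeffs_tendsto_def by simp

lemma coeffs_tendsto_add: "coeffs_tendsto P p \<Longrightarrow> coeffs_tendsto Q q \<Longrightarrow> coeffs_tendsto (\<lambda>k. P k + Q k) (p + q)"
  unfolding coeffs_tendsto_def by (auto intro: tendsto_add)

lemma coeffs_tendsto_mult: "coeffs_tendsto P p \<Longrightarrow> coeffs_tendsto Q q \<Longrightarrow> coeffs_tendsto (\<lambda>k. P k * Q k) (p * q)"
  unfolding coeffs_tendsto_def coeff_mult by (auto intro!: tendsto_sum tendsto_mult)

lemma coeffs_tendsto_sum: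
  "finite S \<Longrightarrow> (\<And>x. x \<in> S \<Longrightarrow> coeffs_tendsto (\<lambda>k. Q k x) (q x))
    \<Longrightarrow> coeffs_tendsto (\<lambda>k. \<Sum>x\<in>S. Q k x) (\<Sum>x\<in>S. q x)"
  by (induction S rule: finite_induct) (auto intro: coeffs_tendsto_add coeffs_tendsto_const)

lemma coeffs_tendsto_prod:
  "finite S \<Longrightarrow> (\<And>x. x \<in> S \<Longrightarrow> coeffs_tendsto (\<lambda>k. Q k x) (q x))
    \<Longrightarrow> coeffs_tendsto (\<lambda>k. \<Prod>x\<in>S. Q k x) (\<Prod>x\<in>S. q x)"
  by (induction S rule: finite_induct) (auto intro: coeffs_tendsto_mult coeffs_tendsto_const)

lemma coeffs_tendsto_pCons_0: "c \<longlonglongrightarrow> c0 \<Longrightarrow> coeffs_tendsto (\<lambda>k. [:c k:]) [:c0:]"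
  unfolding coeffs_tendsto_def by (auto simp: coeff_pCons split: nat.split)

lemma poly_tendsto_if_coeffs_tendsto:
  assumes "coeffs_tendsto P p" "\<And>k. degree (P k) \<le> n" "degree p \<le> n"
  shows "(\<lambda>k. poly (P k) a) \<longlonglongrightarrow> poly p a"
proof -
  have poly_eq: "poly q a = (\<Sum>i<Suc n. coeff q i * a ^ i)" if "degree q \<le> n" for q :: "complex poly"
    using that poly_eq_sum_lessThan[of q "Suc n" a] by simp
  have "(\<lambda>k. \<Sum>i<Suc n. coeff (P k) i * a ^ i) \<longlonglongrightarrow> (\<Sum>i<Suc n. coeff p i * a ^ i)"
    using assms(1) unfolding coeffs_tendsto_def by (intro tendsto_intros) auto
  then show ?thesis by (simp add: poly_eq assms(2,3))
qed

lemma norm_poly_linear_factors_ge: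
  fixes cs :: "complex list"
  assumes "\<forall>c\<in>set cs. r \<le> cmod (a - c)" "0 \<le> r"
  shows "r ^ length cs \<le> cmod (poly (\<Prod>c\<leftarrow>cs. [:-c, 1:]) a)"
  using assms
proof (induction cs)
  case (Cons c cs)
  have "r ^ length (c # cs) \<le> cmod (a - c) * cmod (poly (\<Prod>c\<leftarrow>cs. [:-c, 1:]) a)"
    using Cons by (simp add: mult_mono)
  also have "\<dots> = cmod (poly (\<Prod>c\<leftarrow>c # cs. [:-c, 1:]) a)"
    by (simp add: norm_mult[symmetric] left_diff_distrib)
  finally show ?case .
qed simp

lemma monic_poly_eq_linear_factors:
  fixes p :: "complex poly"
  assumes "degree p = n" "coeff p n = 1"
  obtains cs where "p = (\<Prod>c\<leftarrow>cs. [:-c, 1:])" "length cs = n"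
proof -
  obtain cs where "Polynomial.smult (lead_coeff p) (\<Prod>a\<leftarrow>cs. [:- a, 1:]) = p"
    using fundamental_theorem_algebra_factorized by blast
  then have "p = (\<Prod>a\<leftarrow>cs. [:- a, 1:])" using assms by simp
  moreover from this have "length cs = n" using assms degree_linear_factors[of uminus cs] by simp
  ultimately show ?thesis by (rule that)
qed

lemma poly_nearest_root:
  fixes p :: "complex poly"
  assumes "0 < degree p"
  shows "\<exists>b. poly p b = 0 \<and> (\<forall>z. poly p z = 0 \<longrightarrow> cmod (a - b) \<le> cmod (a - z))"
proof -
  let ?S = "{z. poly p z = 0}"
  have "p \<noteq> 0" using assms by auto
  then have fin: "finite ?S" by (rule poly_roots_finite)
  have "\<not> constant (poly p)" using assms constant_degree by force
  then have ne: "?S \<noteq> {}" using fundamental_theorem_of_algebra by blast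
  let ?m = "Min ((\<lambda>z. cmod (a - z)) ` ?S)"
  have "?m \<in> (\<lambda>z. cmod (a - z)) ` ?S" using fin ne by (intro Min_in) auto
  then obtain b where "b \<in> ?S" "cmod (a - b) = ?m" by auto
  moreover have "\<forall>z\<in>?S. ?m \<le> cmod (a - z)" using fin by auto
  ultimately show ?thesis by auto
qed

text \<open>If \<open>b\<^sub>k\<close> is a root of the monic \<open>P\<^sub>k\<close> nearest to \<open>a\<close>, then \<open>|a - b\<^sub>k|\<^sup>n \<le> |P\<^sub>k(a)| \<rightarrow> |p(a)| = 0\<close>.\<close>
lemma monic_roots_tendsto_root:
  fixes P :: "nat \<Rightarrow> complex poly"
  assumes P: "\<And>k. degree (P k) = Suc m \<and> coeff (P k) (Suc m) = 1"
    and p: "degree p = Suc m" and conv: "coeffs_tendsto P p" and a: "poly p a = 0"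
  obtains b where "\<And>k. poly (P k) (b k) = 0" "b \<longlonglongrightarrow> a"
proof -
  have "\<exists>b. poly (P k) b = 0 \<and> (\<forall>z. poly (P k) z = 0 \<longrightarrow> cmod (a - b) \<le> cmod (a - z))" for k
    using P[of k] by (intro poly_nearest_root) simp
  then obtain b where b: "\<And>k. poly (P k) (b k) = 0"
     "\<And>k z. poly (P k) z = 0 \<Longrightarrow> cmod (a - b k) \<le> cmod (a - z)"
    by metis
  have bound: "cmod (a - b k) ^ Suc m \<le> cmod (poly (P k) a)" for k
  proof -
    obtain cs where cs: "P k = (\<Prod>c\<leftarrow>cs. [:-c, 1:])" "length cs = Suc m"
      using monic_poly_eq_linear_factors P by blast
    have "poly (P k) c = 0" if "c \<in> set cs" for c
      using that unfolding cs(1) by (induction cs) auto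
    then have "\<forall>c\<in>set cs. cmod (a - b k) \<le> cmod (a - c)" using b(2) by blast
    from norm_poly_linear_factors_ge[OF this] cs show ?thesis by simp
  qed
  have "(\<lambda>k. poly (P k) a) \<longlonglongrightarrow> 0"
    using poly_tendsto_if_coeffs_tendsto[OF conv, of "Suc m" a] P p a by simp
  then have "(\<lambda>k. cmod (a - b k) ^ Suc m) \<longlonglongrightarrow> 0"
    by (rule tendsto_sandwich[rotated 2, OF tendsto_const tendsto_norm_zero])
      (use bound in auto)
  then have "(\<lambda>k. root (Suc m) (cmod (a - b k) ^ Suc m)) \<longlonglongrightarrow> root (Suc m) 0"
    by (intro tendsto_real_root) auto
  moreover have "root (Suc m) (cmod (a - b k) ^ Suc m) = cmod (a - b k)" for k
    by (rule real_root_power_cancel) auto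
  ultimately have "(\<lambda>k. a - b k) \<longlonglongrightarrow> 0"
    by (simp add: tendsto_norm_zero_iff)
  then have "b \<longlonglongrightarrow> a"
    using tendsto_diff[OF tendsto_const[of a]] by fastforce
  with b(1) show ?thesis by (rule that)
qed

text \<open>Split off a root tracked by \<open>monic_roots_tendsto_root\<close> and induct on the degree.\<close>
lemma root_sum_tendsto:
  fixes g :: "complex \<Rightarrow> real"
  assumes g: "\<And>z. isCont g z"
  shows "(\<And>k. degree (P k) = n \<and> coeff (P k) n = 1) \<Longrightarrow> degree p = n \<Longrightarrow> coeff p n = 1
    \<Longrightarrow> coeffs_tendsto P p \<Longrightarrow> (\<lambda>k. root_sum g (P k)) \<longlonglongrightarrow> root_sum g p"
proof (induction n arbitrary: P p)
  case 0
  have one: "q = 1" if "degree q = 0" "coeff q 0 = 1" for q :: "complex poly"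
    using that by (metis degree_0_id one_pCons)
  have "P k = 1" for k using one 0 by auto
  moreover have "p = 1" using one 0 by auto
  ultimately show ?case by simp
next
  case (Suc m)
  obtain a where a: "poly p a = 0"
    using fundamental_theorem_of_algebra constant_degree Suc.prems(2) by force
  obtain b where b: "\<And>k. poly (P k) (b k) = 0" and ba: "b \<longlonglongrightarrow> a"
    using monic_roots_tendsto_root[OF Suc.prems(1,2,4) a] by blast
  define Q where "Q k = synthetic_div (P k) (b k)" for k
  define q where "q = synthetic_div p a"
  have PQ: "P k = [:-b k, 1:] * Q k" for k
    using synthetic_div_correct'[of "b k" "P k"] b Q_def by simp
  have pq: "p = [:-a, 1:] * q"
    using synthetic_div_correct'[of a p] a q_def by simp
  have Q: "coeff (Q k) j = (\<Sum>i<Suc m. coeff (P k) (Suc j + i) * b k ^ i)" for k j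
    unfolding Q_def by (rule coeff_synthetic_div_eq_sum) (use Suc.prems(1) in simp)
  have q: "coeff q j = (\<Sum>i<Suc m. coeff p (Suc j + i) * a ^ i)" for j
    unfolding q_def by (rule coeff_synthetic_div_eq_sum) (use Suc.prems(2) in simp)
  have Q_monic: "degree (Q k) = m \<and> coeff (Q k) m = 1" for k
    unfolding Q_def using Suc.prems(1)[of k] by (intro monic_synthetic_div) auto
  moreover have q_monic: "degree q = m \<and> coeff q m = 1"
    unfolding q_def using Suc.prems(2,3) by (rule monic_synthetic_div)
  moreover have "coeffs_tendsto Q q"
    using Suc.prems(4) unfolding coeffs_tendsto_def Q q by (auto intro!: tendsto_intros ba)
  ultimately have "(\<lambda>k. root_sum g (Q k)) \<longlonglongrightarrow> root_sum g q"
    using Suc.IH by blast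
  then have "(\<lambda>k. g (b k) + root_sum g (Q k)) \<longlonglongrightarrow> g a + root_sum g q"
    by (intro tendsto_add isCont_tendsto_compose[OF g ba])
  moreover have "Q k \<noteq> 0" "q \<noteq> 0" for k
    using Q_monic[of k] q_monic by (metis coeff_0 zero_neq_one)+
  ultimately show ?case
    by (subst pq, subst PQ) (simp only: root_sum_linear_mult)
qed

lemma isCont_eta: "isCont eta x"
proof -
  have left: "(eta \<longlongrightarrow> 0) (at_left 0)"
    by (rule tendsto_eventually, simp add: eventually_at_left_field eta_def)
      (auto intro: exI[of _ "-1"])
  have "((\<lambda>y. - y * log 2 y) \<longlongrightarrow> 0) (at_right 0)"
    unfolding log_def by real_asymp
  then have right: "(eta \<longlongrightarrow> 0) (at_right 0)"
    by (rule tendsto_cong[THEN iffD1, rotated])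
      (auto simp: eventually_at_right_field eta_def intro: exI[of _ 1])
  consider "x < 0" | "x = 0" | "x > 0" by linarith
  then show ?thesis
  proof cases
    case 1
    have "\<forall>\<^sub>F y in nhds x. eta y = 0"
      using eventually_nhds_in_open[of "{..<0}" x] 1 by (auto elim!: eventually_mono simp: eta_def)
    then show ?thesis using 1 by (simp add: isCont_cong eta_def)
  next
    case 2
    then show ?thesis using left right by (simp add: isCont_def eta_def filterlim_split_at)
  next
    case 3
    have "\<forall>\<^sub>F y in nhds x. eta y = - y * log 2 y"
      using eventually_nhds_in_open[of "{0<..}" x] 3 by (auto elim!: eventually_mono simp: eta_def)
    moreover have "isCont (\<lambda>y. - y * log 2 y) x" using 3 by (intro continuous_intros) auto
    ultimately show ?thesis using 3 by (simp add: isCont_cong eta_def)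
  qed
qed

lemma coeffs_tendsto_char_poly:
  assumes A: "\<And>k. A k \<in> carrier_mat n n" and B: "B \<in> carrier_mat n n"
    and conv: "\<And>i j. i < n \<Longrightarrow> j < n \<Longrightarrow> (\<lambda>k. A k $$ (i,j)) \<longlonglongrightarrow> B $$ (i,j)"
  shows "coeffs_tendsto (\<lambda>k. char_poly (A k)) (char_poly B)"
proof -
  have entry: "char_poly_matrix M $$ (i,j) = (if i = j then [:0,1:] else 0) + [:- M $$ (i,j):]"
    if "M \<in> carrier_mat n n" "i < n" "j < n" for M :: "complex mat" and i j
    using that by (simp add: char_poly_matrix_def)
  have leibniz: "char_poly M = (\<Sum>p\<in>{p. p permutes {0..<n}}. signof p * (\<Prod>i=0..<n. char_poly_matrix M $$ (i, p i)))"
    if "M \<in> carrier_mat n n" for M :: "complex mat"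
    unfolding char_poly_def by (rule det_def') (use that in simp)
  show ?thesis
    unfolding leibniz[OF A] leibniz[OF B]
  proof (intro coeffs_tendsto_sum coeffs_tendsto_mult coeffs_tendsto_const coeffs_tendsto_prod)
    fix p i assume p: "p \<in> {p. p permutes {0..<n}}" and i: "i \<in> {0..<n}"
    have pi: "p i < n" using p i by (auto simp: permutes_in_image)
    have "(\<lambda>k. char_poly_matrix (A k) $$ (i, p i)) = (\<lambda>k. (if i = p i then [:0,1:] else 0) + [:- A k $$ (i, p i):])"
      using entry[OF A] i pi by auto
    moreover have "char_poly_matrix B $$ (i, p i) = (if i = p i then [:0,1:] else 0) + [:- B $$ (i, p i):]"
      using entry[OF B] i pi by auto
    ultimately show "coeffs_tendsto (\<lambda>k. char_poly_matrix (A k) $$ (i, p i)) (char_poly_matrix B $$ (i, p i))"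
      using i pi by (simp only:) (intro coeffs_tendsto_add coeffs_tendsto_const coeffs_tendsto_pCons_0
        tendsto_minus conv, auto)
  qed (auto simp: finite_permutations)
qed

lemma vn_entropy_tendsto:
  assumes A: "\<And>k. A k \<in> carrier_mat n n" and B: "B \<in> carrier_mat n n"
    and conv: "\<And>i j. i < n \<Longrightarrow> j < n \<Longrightarrow> (\<lambda>k. A k $$ (i,j)) \<longlonglongrightarrow> B $$ (i,j)"
  shows "(\<lambda>k. vn_entropy (A k)) \<longlonglongrightarrow> vn_entropy B"
proof -
  have "isCont (\<lambda>z. eta (Re z)) z" for z
    by (rule isCont_o2[where f = Re, OF _ isCont_eta])
      (unfold isCont_def, rule tendsto_Re[OF tendsto_ident_at])
  then have "(\<lambda>k. root_sum (\<lambda>z. eta (Re z)) (char_poly (A k))) \<longlonglongrightarrow> root_sum (\<lambda>z. eta (Re z)) (char_poly B)"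
    by (rule root_sum_tendsto[OF _ _ _ _ coeffs_tendsto_char_poly[OF A B conv]])
      (use degree_monic_char_poly[OF A] degree_monic_char_poly[OF B] in auto)
  then show ?thesis unfolding vn_entropy_def root_sum_def by simp
qed

lemma isCont_choi_coeff: "i < 4 \<Longrightarrow> j < 4 \<Longrightarrow> isCont (\<lambda>z. choi_coeff (fst z) (snd z) i j) z"
  by (drule less_4_cases)+ (elim disjE; simp add: choi_coeff_def split_def)

lemma isCont_stokes_map_ket_entry:
  assumes "x < 2" "a < 2" "b < 2"
  shows "isCont (\<lambda>z. stokes_map (R_of (fst z) (snd z)) (t_of (fst z)) (ket_proj x) $$ (a, b)) z"
proof -
  have K: "ket_proj x \<in> carrier_mat 2 2" by (simp add: ket_proj_def)
  have "x = 0 \<or> x = 1" "a = 0 \<or> a = 1" "b = 0 \<or> b = 1" using assms by auto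
  then show ?thesis
    unfolding stokes_map_entries[OF K]
    by (elim disjE) (simp_all add: ket_proj_def R_of_def t_of_def split_def Let_def;
        auto intro!: continuous_intros)+
qed

lemma continuous_eve_ambiguity:
  "continuous_on UNIV (\<lambda>z. eve_ambiguity (R_of (fst z) (snd z)) (t_of (fst z)))"
proof (rule continuous_on_sequentiallyI)
  fix u :: "nat \<Rightarrow> param6 \<times> real" and z assume u: "u \<longlonglongrightarrow> z"
  let ?E = "\<lambda>z. stokes_map (R_of (fst z) (snd z)) (t_of (fst z))"
  have "(\<lambda>k. vn_entropy (?E (u k) (ket_proj x))) \<longlonglongrightarrow> vn_entropy (?E z (ket_proj x))" if "x < 2" for x
    by (rule vn_entropy_tendsto[OF stokes_map_carrier stokes_map_carrier])
      (rule isCont_tendsto_compose[OF isCont_stokes_map_ket_entry[OF that] u, simplified])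
  moreover have "(\<lambda>k. vn_entropy (choi (R_of (fst (u k)) (snd (u k))) (t_of (fst (u k)))))
     \<longlonglongrightarrow> vn_entropy (choi (R_of (fst z) (snd z)) (t_of (fst z)))"
    unfolding choi_eq_choi_coeff
    by (rule vn_entropy_tendsto[of _ 4])
      (auto intro!: tendsto_of_real isCont_tendsto_compose[OF isCont_choi_coeff u, simplified])
  ultimately show "(\<lambda>k. eve_ambiguity (R_of (fst (u k)) (snd (u k))) (t_of (fst (u k))))
     \<longlonglongrightarrow> eve_ambiguity (R_of (fst z) (snd z)) (t_of (fst z))"
    unfolding eve_ambiguity_def by (intro tendsto_intros) auto
qed

section \<open>Berge's maximum theorem\<close>

definition fiber_inf :: "('a \<times> 'b) set \<Rightarrow> ('a \<times> 'b \<Rightarrow> real) \<Rightarrow> 'a \<Rightarrow> real" where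
  "fiber_inf G h w = Inf ((\<lambda>s. h (w, s)) ` {s. (w, s) \<in> G})"

lemma compact_fiber:
  fixes G :: "('a::heine_borel \<times> 'b::heine_borel) set"
  assumes "closed G" "bounded (snd ` G)"
  shows "compact {s. (w, s) \<in> G}"
proof -
  have "closed ((\<lambda>s. (w, s)) -` G)" by (intro closed_vimage assms(1) continuous_intros)
  moreover have "{s. (w, s) \<in> G} \<subseteq> snd ` G" by force
  ultimately show ?thesis
    using bounded_subset[OF assms(2)] by (simp add: compact_eq_bounded_closed vimage_def)
qed

lemma fiber_inf_attained:
  fixes G :: "('a::heine_borel \<times> 'b::heine_borel) set"
  assumes "closed G" "bounded (snd ` G)" "continuous_on UNIV h" "(w, s0) \<in> G"
  obtains s where "(w, s) \<in> G" "fiber_inf G h w = h (w, s)" "\<And>s'. (w, s') \<in> G \<Longrightarrow> h (w, s) \<le> h (w, s')"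
proof -
  let ?K = "{s. (w, s) \<in> G}"
  have "continuous_on ?K (\<lambda>s. h (w, s))"
    by (rule continuous_on_compose2[OF assms(3)]) (auto intro!: continuous_intros)
  then obtain s where s: "s \<in> ?K" "\<And>s'. s' \<in> ?K \<Longrightarrow> h (w, s) \<le> h (w, s')"
    using continuous_attains_inf[OF compact_fiber[OF assms(1,2)]] assms(4) by blast
  moreover have "fiber_inf G h w = h (w, s)"
    unfolding fiber_inf_def using s by (intro cInf_eq_minimum) auto
  ultimately show ?thesis using that by blast
qed

text \<open>Upper hemicontinuity: otherwise \<open>a\<close> would lie in the closed projection of the compact
  set \<open>G \<inter> \<Phi> \<inter> (cball a 1 \<times> UNIV)\<close>.\<close>
lemma eventually_fibers_avoid_closed:
  fixes G :: "('a::heine_borel \<times> 'b::heine_borel) set"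
  assumes "closed G" "bounded (snd ` G)" "closed \<Phi>" "\<And>s. (a, s) \<in> G \<Longrightarrow> (a, s) \<notin> \<Phi>"
  shows "\<forall>\<^sub>F w in nhds a. \<forall>s. (w, s) \<in> G \<longrightarrow> (w, s) \<notin> \<Phi>"
proof -
  let ?K = "G \<inter> \<Phi> \<inter> (cball a 1 \<times> UNIV)"
  have "?K \<subseteq> cball a 1 \<times> snd ` G" by force
  then have "bounded ?K" by (rule bounded_subset[OF bounded_Times[OF bounded_cball assms(2)]])
  moreover have "closed ?K" by (intro closed_Int assms(1,3) closed_Times closed_cball closed_UNIV)
  ultimately have "closed (fst ` ?K)"
    by (intro compact_imp_closed compact_continuous_image continuous_intros)
      (simp add: compact_eq_bounded_closed)
  moreover have "a \<notin> fst ` ?K" using assms(4) by force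
  ultimately have "\<forall>\<^sub>F w in nhds a. w \<in> - fst ` ?K"
    by (intro eventually_nhds_in_open) auto
  moreover have "\<forall>\<^sub>F w in nhds a. dist w a < 1"
    by (rule eventually_nhds_metric[THEN iffD2], rule exI[of _ 1]) simp
  ultimately show ?thesis
    by eventually_elim (force simp: dist_commute)
qed

lemma eventually_fiber_inf_less:
  fixes G :: "('a::heine_borel \<times> 'b::heine_borel) set"
  assumes G: "closed G" "bounded (snd ` G)" and h: "continuous_on UNIV h"
    and lhc: "\<And>a s e. (a, s) \<in> G \<Longrightarrow> 0 < e \<Longrightarrow> \<forall>\<^sub>F w in nhds a. w \<in> fst ` G \<longrightarrow> (\<exists>s'. (w, s') \<in> G \<and> dist s' s < e)"
    and a: "(a, s0) \<in> G" and e: "0 < e"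
  shows "\<forall>\<^sub>F w in nhds a. w \<in> fst ` G \<longrightarrow> fiber_inf G h w < fiber_inf G h a + e"
proof -
  obtain st where st: "(a, st) \<in> G" "fiber_inf G h a = h (a, st)"
    using fiber_inf_attained[OF G h a] by blast
  obtain r where r: "0 < r" "\<And>z. dist z (a, st) < r \<Longrightarrow> dist (h z) (h (a, st)) < e"
    using h e unfolding continuous_on_iff by blast
  have "\<forall>\<^sub>F w in nhds a. w \<in> fst ` G \<longrightarrow> (\<exists>s'. (w, s') \<in> G \<and> dist s' st < r/2)"
    by (rule lhc[OF st(1)]) (use r(1) in simp)
  moreover have "\<forall>\<^sub>F w in nhds a. dist w a < r/2"
    by (rule eventually_nhds_metric[THEN iffD2], rule exI[of _ "r/2"]) (use r(1) in simp)
  ultimately show ?thesis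
  proof eventually_elim
    case (elim w)
    show ?case
    proof
      assume "w \<in> fst ` G"
      then obtain s' where s': "(w, s') \<in> G" "dist s' st < r/2" using elim(1) by blast
      obtain s where s: "(w, s) \<in> G" "fiber_inf G h w = h (w, s)" "h (w, s) \<le> h (w, s')"
        using fiber_inf_attained[OF G h s'(1)] s'(1) by metis
      have "dist (w, s') (a, st) < r"
        using elim(2) s'(2) by (simp add: dist_Pair_Pair sqrt_sum_squares_half_less)
      then have "h (w, s') < h (a, st) + e" using r(2) by (force simp: dist_real_def)
      then show "fiber_inf G h w < fiber_inf G h a + e" using s st by simp
    qed
  qed
qed

lemma eventually_fiber_inf_greater:
  fixes G :: "('a::heine_borel \<times> 'b::heine_borel) set"
  assumes G: "closed G" "bounded (snd ` G)" and h: "continuous_on UNIV h"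
    and a: "(a, s0) \<in> G" and e: "0 < e"
  shows "\<forall>\<^sub>F w in nhds a. w \<in> fst ` G \<longrightarrow> fiber_inf G h a - e < fiber_inf G h w"
proof -
  obtain st where "fiber_inf G h a = h (a, st)" "\<And>s. (a, s) \<in> G \<Longrightarrow> h (a, st) \<le> h (a, s)"
    using fiber_inf_attained[OF G h a] by blast
  then have "(a, s) \<notin> {z. h z \<le> fiber_inf G h a - e}" if "(a, s) \<in> G" for s
    using that e by force
  then have "\<forall>\<^sub>F w in nhds a. \<forall>s. (w, s) \<in> G \<longrightarrow> (w, s) \<notin> {z. h z \<le> fiber_inf G h a - e}"
    by (intro eventually_fibers_avoid_closed G closed_Collect_le h continuous_on_const) auto
  then show ?thesis
  proof (rule eventually_mono, intro impI)
    fix w assume avoid: "\<forall>s. (w, s) \<in> G \<longrightarrow> (w, s) \<notin> {z. h z \<le> fiber_inf G h a - e}"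
      and "w \<in> fst ` G"
    then obtain s0 where "(w, s0) \<in> G" by force
    from fiber_inf_attained[OF G h this] obtain s where "(w, s) \<in> G" "fiber_inf G h w = h (w, s)" .
    then show "fiber_inf G h a - e < fiber_inf G h w" using avoid by force
  qed
qed

theorem continuous_on_fiber_inf:
  fixes G :: "('a::heine_borel \<times> 'b::heine_borel) set"
  assumes G: "closed G" "bounded (snd ` G)" and h: "continuous_on UNIV h"
    and lhc: "\<And>a s e. (a, s) \<in> G \<Longrightarrow> 0 < e \<Longrightarrow> \<forall>\<^sub>F w in nhds a. w \<in> fst ` G \<longrightarrow> (\<exists>s'. (w, s') \<in> G \<and> dist s' s < e)"
  shows "continuous_on (fst ` G) (fiber_inf G h)"
  unfolding continuous_on_iff
proof (intro ballI allI impI)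
  fix a e assume "a \<in> fst ` G" "0 < (e::real)"
  then obtain s0 where a: "(a, s0) \<in> G" by force
  have "\<forall>\<^sub>F w in nhds a. w \<in> fst ` G \<longrightarrow> fiber_inf G h w < fiber_inf G h a + e"
    using G h lhc a \<open>0 < e\<close> by (rule eventually_fiber_inf_less)
  moreover have "\<forall>\<^sub>F w in nhds a. w \<in> fst ` G \<longrightarrow> fiber_inf G h a - e < fiber_inf G h w"
    using G h a \<open>0 < e\<close> by (rule eventually_fiber_inf_greater)
  ultimately have "\<forall>\<^sub>F w in nhds a. w \<in> fst ` G \<longrightarrow> dist (fiber_inf G h w) (fiber_inf G h a) < e"
    by eventually_elim (auto simp: dist_real_def)
  then show "\<exists>d>0. \<forall>w\<in>fst ` G. dist w a < d \<longrightarrow> dist (fiber_inf G h w) (fiber_inf G h a) < e"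
    unfolding eventually_nhds_metric by blast
qed

section \<open>The fibres of the restricted channel family\<close>

definition choi_psd_graph :: "(param6 \<times> real) set" where
  "choi_psd_graph = {(w, s). real_psd 4 (choi_coeff w s)}"

text \<open>Testing the form on \<open>e\<^sub>0 \<plusminus> e\<^sub>3\<close> and \<open>e\<^sub>1 \<plusminus> e\<^sub>2\<close> bounds \<open>\<plusminus>s\<close> by four affine expressions in
  \<open>R\<^sub>z\<^sub>z, R\<^sub>x\<^sub>x\<close> that average to \<open>1\<close>.\<close>
lemma abs_le_1_if_real_psd_choi_coeff:
  assumes "real_psd 4 (choi_coeff w s)"
  shows "\<bar>s\<bar> \<le> 1"
proof -
  obtain rzz rzx rxz rxx tz tx where w: "w = (rzz, rzx, rxz, rxx, tz, tx)" by (cases w) auto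
  have q: "0 \<le> quad_form 4 (choi_coeff w s) x" for x
    using assms unfolding real_psd_def by blast
  have "0 \<le> 1 + rzz + rxx + s"
    using q[of "\<lambda>i. if i = 0 \<or> i = 3 then 1 else 0"]
    by (simp add: quad_form_def sum_lessThan_4 choi_coeff_def w field_simps; linarith)
  moreover have "0 \<le> 1 + rzz - rxx - s"
    using q[of "\<lambda>i. if i = 0 then 1 else if i = 3 then -1 else 0"]
    by (simp add: quad_form_def sum_lessThan_4 choi_coeff_def w field_simps; linarith)
  moreover have "0 \<le> 1 - rzz + rxx - s"
    using q[of "\<lambda>i. if i = 1 \<or> i = 2 then 1 else 0"]
    by (simp add: quad_form_def sum_lessThan_4 choi_coeff_def w field_simps; linarith)
  moreover have "0 \<le> 1 - rzz - rxx + s"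
    using q[of "\<lambda>i. if i = 1 then 1 else if i = 2 then -1 else 0"]
    by (simp add: quad_form_def sum_lessThan_4 choi_coeff_def w field_simps; linarith)
  ultimately show ?thesis by linarith
qed

lemma closed_choi_psd_graph: "closed choi_psd_graph"
proof -
  have "choi_psd_graph = (\<Inter>x. {z. 0 \<le> quad_form 4 (choi_coeff (fst z) (snd z)) x})"
    by (auto simp: choi_psd_graph_def real_psd_def)
  also have "closed \<dots>"
    unfolding quad_form_def
    by (intro closed_INT ballI closed_Collect_le continuous_on_const continuous_on_sum continuous_intros
        continuous_at_imp_continuous_on isCont_choi_coeff) auto
  finally show ?thesis .
qed

lemma bounded_snd_choi_psd_graph: "bounded (snd ` choi_psd_graph)"
  unfolding bounded_iff
  by (auto simp: choi_psd_graph_def intro!: exI[of _ 1] abs_le_1_if_real_psd_choi_coeff)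

lemma quad_form_choi_coeff_affine:
  "quad_form 4 (choi_coeff w ((1 - t) * s1 + t * s2)) x
     = (1 - t) * quad_form 4 (choi_coeff w s1) x + t * quad_form 4 (choi_coeff w s2) x"
proof -
  define m where "m = (1 - t) * s1 + t * s2"
  have entry: "choi_coeff w m i j = (1 - t) * choi_coeff w s1 i j + t * choi_coeff w s2 i j"
    if "i < 4" "j < 4" for i j
    using less_4_cases[OF that(1)] less_4_cases[OF that(2)]
    by (cases w) (auto simp: choi_coeff_def m_def field_simps)
  have "quad_form 4 (choi_coeff w m) x = (\<Sum>i<4. \<Sum>j<4.
      (1 - t) * (x i * choi_coeff w s1 i j * x j) + t * (x i * choi_coeff w s2 i j * x j))"
    unfolding quad_form_def by (intro sum.cong refl) (simp add: entry algebra_simps)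
  then show ?thesis
    unfolding m_def by (simp add: quad_form_def sum.distrib sum_distrib_left)
qed

lemma choi_coeff_column_diff:
  "n < 4 \<Longrightarrow> (\<Sum>i<4. choi_coeff w s2 i n * x i) - (\<Sum>i<4. choi_coeff w s1 i n * x i)
     = (s2 - s1) / 4 * (if n = 0 then x 3 else if n = 1 then - x 2 else if n = 2 then - x 1 else x 0)"
  by (cases w, drule less_4_cases, elim disjE) (simp_all add: sum_lessThan_4 choi_coeff_def field_simps)

text \<open>A null vector of the interior point is a null vector of both endpoints, hence is killed
  by their anti-diagonal difference.\<close>
lemma quad_form_choi_coeff_pos_between:
  assumes psd1: "real_psd 4 (choi_coeff w s1)" and psd2: "real_psd 4 (choi_coeff w s2)"
    and "s1 \<noteq> s2" "0 < t" "t < 1" and x: "\<exists>i<4. x i \<noteq> 0"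
  shows "0 < quad_form 4 (choi_coeff w ((1 - t) * s1 + t * s2)) x"
proof (rule ccontr)
  let ?q = "\<lambda>s. quad_form 4 (choi_coeff w s) x"
  assume "\<not> 0 < ?q ((1 - t) * s1 + t * s2)"
  moreover have "0 \<le> ?q s1" "0 \<le> ?q s2" using psd1 psd2 unfolding real_psd_def by blast+
  ultimately have "?q s1 = 0" "?q s2 = 0"
    using \<open>0 < t\<close> \<open>t < 1\<close> unfolding quad_form_choi_coeff_affine
    by (smt (verit) mult_pos_pos mult_nonneg_nonneg)+
  then have "(\<Sum>i<4. choi_coeff w s i n * x i) = 0" if "s \<in> {s1, s2}" "n < 4" for s n
    using that psd1 psd2 by (auto intro: real_psd_null_vector choi_coeff_sym)
  then have "(s2 - s1) / 4 * (if n = 0 then x 3 else if n = 1 then - x 2 else if n = 2 then - x 1 else x 0) = 0"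
    if "n < 4" for n :: nat
    using choi_coeff_column_diff[OF that, of w s2 x s1] that by simp
  then have "x 0 = 0" "x 1 = 0" "x 2 = 0" "x 3 = 0"
    using \<open>s1 \<noteq> s2\<close> by (force dest: spec[of _ 0] spec[of _ 1] spec[of _ 2] spec[of _ 3])+
  then show False using x less_4_cases by auto
qed

lemma eventually_real_psd_choi_coeff:
  assumes pd: "\<And>x. (\<exists>i<4. x i \<noteq> 0) \<Longrightarrow> 0 < quad_form 4 (choi_coeff a s) x"
  shows "\<forall>\<^sub>F w in nhds a. real_psd 4 (choi_coeff w s)"
proof -
  obtain \<delta> where \<delta>: "0 < \<delta>" "\<And>x. \<delta> * (\<Sum>i<4. (x i)\<^sup>2) \<le> quad_form 4 (choi_coeff a s) x"
    using quad_form_4_pos_margin[OF pd] by blast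
  have tendsto: "((\<lambda>w. choi_coeff w s i j) \<longlongrightarrow> choi_coeff a s i j) (nhds a)" if "i < 4" "j < 4" for i j
  proof -
    have "isCont (\<lambda>w. choi_coeff (fst (w, s)) (snd (w, s)) i j) a"
      by (rule isCont_o2[OF _ isCont_choi_coeff[OF that]]) (intro continuous_intros)
    then have "isCont (\<lambda>w. choi_coeff w s i j) a" by simp
    then show ?thesis unfolding isCont_def by (rule tendsto_at_iff_tendsto_nhds[THEN iffD1])
  qed
  have "\<forall>\<^sub>F w in nhds a. \<bar>choi_coeff w s i j - choi_coeff a s i j\<bar> < \<delta> / 16"
    if "i < 4" "j < 4" for i j
    using tendsto[OF that, unfolded tendsto_iff dist_real_def, rule_format, of "\<delta> / 16"] \<delta>(1)
    by simp
  then have "\<forall>\<^sub>F w in nhds a. \<forall>i\<in>{..<4}. \<forall>j\<in>{..<4}. \<bar>choi_coeff w s i j - choi_coeff a s i j\<bar> < \<delta> / 16"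
    by (auto intro!: eventually_ball_finite)
  then show ?thesis
  proof (rule eventually_mono)
    fix w assume "\<forall>i\<in>{..<4}. \<forall>j\<in>{..<4}. \<bar>choi_coeff w s i j - choi_coeff a s i j\<bar> < \<delta> / 16"
    then have "(\<Sum>i<4. \<Sum>j<4. \<bar>choi_coeff w s i j - choi_coeff a s i j\<bar>) \<le> (\<Sum>i<(4::nat). \<Sum>j<(4::nat). \<delta> / 16)"
      by (intro sum_mono) (auto intro: less_imp_le)
    then show "real_psd 4 (choi_coeff w s)"
      by (intro real_psd_perturb[OF \<delta>(2)]) simp
  qed
qed

text \<open>Lower hemicontinuity of the fibres: if the fibre over \<open>a\<close> is an interval, points of its interior
  stay feasible near \<open>a\<close>; if it is a single point, closedness of the graph pins the nearby fibres to it.\<close>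
lemma lower_hemicontinuous_choi_psd_graph:
  assumes st: "(a, st) \<in> choi_psd_graph" and e: "0 < e"
  shows "\<forall>\<^sub>F w in nhds a. w \<in> fst ` choi_psd_graph \<longrightarrow> (\<exists>s. (w, s) \<in> choi_psd_graph \<and> dist s st < e)"
proof (cases "\<exists>s2. (a, s2) \<in> choi_psd_graph \<and> s2 \<noteq> st")
  case True
  then obtain s2 where s2: "(a, s2) \<in> choi_psd_graph" "s2 \<noteq> st" by blast
  define t where "t = min (1/2) (e / (2 * \<bar>s2 - st\<bar>))"
  have t: "0 < t" "t < 1" using e s2 by (auto simp: t_def)
  define m where "m = (1 - t) * st + t * s2"
  have "m - st = t * (s2 - st)" by (simp add: m_def algebra_simps)
  then have "\<bar>m - st\<bar> = t * \<bar>s2 - st\<bar>" using t by (simp add: abs_mult)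
  also have "\<dots> \<le> e / 2" using s2(2) by (simp add: t_def min_def field_simps)
  finally have "dist m st < e" using e by (simp add: dist_real_def)
  moreover have "\<forall>\<^sub>F w in nhds a. (w, m) \<in> choi_psd_graph"
    using quad_form_choi_coeff_pos_between[of a st s2 t] st s2 t
    by (auto simp: choi_psd_graph_def m_def intro!: eventually_real_psd_choi_coeff)
  ultimately show ?thesis by (auto elim: eventually_mono)
next
  case False
  have "\<forall>\<^sub>F w in nhds a. \<forall>s. (w, s) \<in> choi_psd_graph \<longrightarrow> (w, s) \<notin> {z. e \<le> dist (snd z) st}"
    using False e
    by (intro eventually_fibers_avoid_closed closed_choi_psd_graph bounded_snd_choi_psd_graph
        closed_Collect_le continuous_intros) auto
  then show ?thesis by (rule eventually_mono) force
qed

theorem lemma1: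
  shows "continuous_on Pdom F"
proof -
  have Pset: "Pset w = {s. (w, s) \<in> choi_psd_graph}" for w
    by (simp add: Pset_def choi_psd_graph_def qubit_channel_iff_real_psd)
  have "Pdom = fst ` choi_psd_graph"
    by (force simp: Pdom_def Pset)
  moreover have "F = fiber_inf choi_psd_graph (\<lambda>z. eve_ambiguity (R_of (fst z) (snd z)) (t_of (fst z)))"
    by (simp add: fun_eq_iff F_def fiber_inf_def Pset)
  ultimately show ?thesis
    using continuous_on_fiber_inf[OF closed_choi_psd_graph bounded_snd_choi_psd_graph
        continuous_eve_ambiguity lower_hemicontinuous_choi_psd_graph]
    by simp
qed

end
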